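(* Let $n,m\ge 3$ and let $G=P_n\square P_m$ be the grid graph. Every $3$-minimal of $G$ contains at least two vertices on the same line.
   Context: The grid graph $P_n\square P_m$ has vertex set $\{(i,j):0\le i\le n-1,\ 0\le j\le m-1\}$, with $(i,j)$ adjacent to $(k,l)$ iff $|i-k|+|j-l|=1$; distance $d((i,j),(k,l))=|i-k|+|j-l|$. A vertex $w$ resolves $u,v$ if $d(w,u)\ne d(w,v)$; a set $R$ is resolving if every pair of distinct vertices is resolved by some vertex of $R$; a $3$-minimal is a resolving set $R$ of cardinality $3$ such that no $R\setminus\{x\}$, $x\in R$, is resolving. Two vertices are on the same line if they share their first coordinate or share their second coordinate. *)

theory Defs
  imports Main
begin

definition grid_vertices :: "nat \<Rightarrow> nat \<Rightarrow> (nat \<times> nat) set" where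
  "grid_vertices n m = {(i, j). i < n \<and> j < m}"

definition grid_dist :: "nat \<times> nat \<Rightarrow> nat \<times> nat \<Rightarrow> nat" where
  "grid_dist u v = nat \<bar>int (fst u) - int (fst v)\<bar> + nat \<bar>int (snd u) - int (snd v)\<bar>"

definition resolves :: "nat \<times> nat \<Rightarrow> nat \<times> nat \<Rightarrow> nat \<times> nat \<Rightarrow> bool" where
  "resolves w u v \<longleftrightarrow> grid_dist w u \<noteq> grid_dist w v"

definition resolving_set :: "nat \<Rightarrow> nat \<Rightarrow> (nat \<times> nat) set \<Rightarrow> bool" where
  "resolving_set n m R \<longleftrightarrow> R \<subseteq> grid_vertices n m \<and>
     (\<forall>u \<in> grid_vertices n m. \<forall>v \<in> grid_vertices n m. u \<noteq> v \<longrightarrow> (\<exists>w \<in> R. resolves w u v))"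

definition three_minimal :: "nat \<Rightarrow> nat \<Rightarrow> (nat \<times> nat) set \<Rightarrow> bool" where
  "three_minimal n m R \<longleftrightarrow> resolving_set n m R \<and> card R = 3 \<and>
     (\<forall>x \<in> R. \<not> resolving_set n m (R - {x}))"

definition same_line :: "nat \<times> nat \<Rightarrow> nat \<times> nat \<Rightarrow> bool" where
  "same_line u v \<longleftrightarrow> fst u = fst v \<or> snd u = snd v"

end

theory Submission
  imports Defs
begin

text \<open>For a unit square with lower corner (i, j), every vertex in the closed quadrants
  {x \<le> i, y \<le> j} and {x \<ge> i+1, y \<ge> j+1} is equidistant from (i, j+1) and (i+1, j), and
  every vertex in the other two diagonal quadrants is equidistant from (i, j) and (i+1, j+1).
  If three vertices have pairwise distinct rows and columns, sort them by first coordinate;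
  according to which of them carries the smallest or largest second coordinate, a unit square
  at the first or the middle vertex puts all three into one such pair of quadrants.  Hence no
  such triple is resolving.\<close>

lemma grid_dist_antidiagonal_eq:
  assumes "(fst w \<le> i \<and> snd w \<le> j) \<or> (i + 1 \<le> fst w \<and> j + 1 \<le> snd w)"
  shows "grid_dist w (i, j + 1) = grid_dist w (i + 1, j)"
  using assms by (cases w) (auto simp: grid_dist_def)

lemma grid_dist_diagonal_eq:
  assumes "(fst w \<le> i \<and> j + 1 \<le> snd w) \<or> (i + 1 \<le> fst w \<and> snd w \<le> j)"
  shows "grid_dist w (i, j) = grid_dist w (i + 1, j + 1)"
  using assms by (cases w) (auto simp: grid_dist_def)

lemma not_resolving_set_if_antidiagonal_quadrants:
  assumes "i + 1 < n" "j + 1 < m"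
    and "\<forall>w\<in>R. (fst w \<le> i \<and> snd w \<le> j) \<or> (i + 1 \<le> fst w \<and> j + 1 \<le> snd w)"
  shows "\<not> resolving_set n m R"
proof -
  have "(i, j + 1) \<in> grid_vertices n m" "(i + 1, j) \<in> grid_vertices n m"
    using assms(1,2) by (auto simp: grid_vertices_def)
  moreover have "\<not> resolves w (i, j + 1) (i + 1, j)" if "w \<in> R" for w
    using assms(3) that grid_dist_antidiagonal_eq by (simp add: resolves_def)
  ultimately show ?thesis
    unfolding resolving_set_def by fastforce
qed

lemma not_resolving_set_if_diagonal_quadrants:
  assumes "i + 1 < n" "j + 1 < m"
    and "\<forall>w\<in>R. (fst w \<le> i \<and> j + 1 \<le> snd w) \<or> (i + 1 \<le> fst w \<and> snd w \<le> j)"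
  shows "\<not> resolving_set n m R"
proof -
  have "(i, j) \<in> grid_vertices n m" "(i + 1, j + 1) \<in> grid_vertices n m"
    using assms(1,2) by (auto simp: grid_vertices_def)
  moreover have "\<not> resolves w (i, j) (i + 1, j + 1)" if "w \<in> R" for w
    using assms(3) that grid_dist_diagonal_eq by (simp add: resolves_def)
  ultimately show ?thesis
    unfolding resolving_set_def by fastforce
qed

lemma not_resolving_set_three_off_line:
  assumes "fst p < fst q" "fst q < fst r"
    and "snd p \<noteq> snd q" "snd p \<noteq> snd r" "snd q \<noteq> snd r"
    and "{p, q, r} \<subseteq> grid_vertices n m"
  shows "\<not> resolving_set n m {p, q, r}"
proof -
  have bounds: "fst r < n" "snd p < m" "snd q < m" "snd r < m"
    using assms(6) by (auto simp: grid_vertices_def)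
  consider "snd p < snd q \<and> snd p < snd r" | "snd q < snd p \<and> snd r < snd p"
    | "snd p < snd r \<and> snd q < snd r" | "snd r < snd p \<and> snd r < snd q"
    using assms(3-5) by linarith
  then show ?thesis
  proof cases
    case 1
    show ?thesis
      by (rule not_resolving_set_if_antidiagonal_quadrants[where i = "fst p" and j = "snd p"])
        (use 1 assms bounds in auto)
  next
    case 2
    show ?thesis
      by (rule not_resolving_set_if_diagonal_quadrants[where i = "fst p" and j = "max (snd q) (snd r)"])
        (use 2 assms bounds in auto)
  next
    case 3
    show ?thesis
      by (rule not_resolving_set_if_antidiagonal_quadrants[where i = "fst q" and j = "max (snd p) (snd q)"])
        (use 3 assms bounds in auto)
  next
    case 4
    show ?thesis
      by (rule not_resolving_set_if_diagonal_quadrants[where i = "fst q" and j = "snd r"])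
        (use 4 assms bounds in auto)
  qed
qed

lemma three_sorted_by:
  fixes f :: "'a \<Rightarrow> 'b::linorder"
  assumes "f x \<noteq> f y" "f x \<noteq> f z" "f y \<noteq> f z"
  obtains p q r where "{x, y, z} = {p, q, r}" "f p < f q" "f q < f r"
proof -
  consider "f x < f y \<and> f y < f z" | "f x < f z \<and> f z < f y"
    | "f y < f x \<and> f x < f z" | "f y < f z \<and> f z < f x"
    | "f z < f x \<and> f x < f y" | "f z < f y \<and> f y < f x"
    using assms by (metis neqE)
  then show ?thesis
    by cases (use that in \<open>auto simp: insert_commute\<close>)
qed

theorem lemma3:
  fixes n m :: nat and R :: "(nat \<times> nat) set"
  assumes "n \<ge> 3" and "m \<ge> 3" and "three_minimal n m R"
  shows "\<exists>u \<in> R. \<exists>v \<in> R. u \<noteq> v \<and> same_line u v"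
proof (rule ccontr)
  assume "\<not> ?thesis"
  then have off_line: "fst u \<noteq> fst v \<and> snd u \<noteq> snd v" if "u \<in> R" "v \<in> R" "u \<noteq> v" for u v
    using that unfolding same_line_def by blast
  have resolving: "resolving_set n m R" and "card R = 3"
    using assms(3) by (auto simp: three_minimal_def)
  then obtain x y z where R: "R = {x, y, z}" "x \<noteq> y" "x \<noteq> z" "y \<noteq> z"
    by (metis card_3_iff)
  then have "fst x \<noteq> fst y" "fst x \<noteq> fst z" "fst y \<noteq> fst z"
    using off_line by simp_all
  then obtain p q r where "{x, y, z} = {p, q, r}" and fst_sorted: "fst p < fst q" "fst q < fst r"
    by (rule three_sorted_by)
  then have pqr: "R = {p, q, r}"
    using R(1) by simp
  have "\<not> resolving_set n m {p, q, r}"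
  proof (rule not_resolving_set_three_off_line[OF fst_sorted])
    have "p \<noteq> q" "p \<noteq> r" "q \<noteq> r"
      using fst_sorted by auto
    then show "snd p \<noteq> snd q" "snd p \<noteq> snd r" "snd q \<noteq> snd r"
      using off_line pqr by simp_all
    show "{p, q, r} \<subseteq> grid_vertices n m"
      using resolving pqr by (simp add: resolving_set_def)
  qed
  with resolving pqr show False
    by simp
qed

end
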